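(* For positive integers $a\ge b$ and odd $k\ge3$, $$\delta_k\binom{ap}{bp}^{\mathfrak a}=-\frac{T^k}{k}\big[a^k-b^k-(a-b)^k\big]\binom{ap}{bp}^{\mathfrak a}.$$
   Context: $\mathcal M^{(1)}=\mathbb Q[\zeta^{\mathfrak a}(3),\zeta^{\mathfrak a}(5),\dots]$ is the free polynomial subalgebra of depth-one motivic MZVs in $\mathcal A=\mathcal H/\zeta^{\mathfrak m}(2)\mathcal H$; $\zeta^{\mathfrak a}(k)=0$ for even $k$. For odd $k\ge3$, $\delta_k$ is the continuous $\mathbb Q((T))$-linear derivation $\partial/\partial\zeta^{\mathfrak a}(k)$ of $\mathcal M^{(1)}((T))$. $H^{\mathfrak a}(n)=(-1)^n\sum_{j\ge1}\binom{n+j-1}{n-1}\zeta^{\mathfrak a}(n+j)T^j$; $H^{\mathfrak a}(1^0)=1$, $H^{\mathfrak a}(1^n)=\frac1n\sum_{i=1}^n(-1)^{i-1}H^{\mathfrak a}(i)H^{\mathfrak a}(1^{n-i})$; $c_n^{\mathfrak a}=n\sum_{j\ge0}(n-1)^jT^jH^{\mathfrak a}(1^j)$ for $n\ge1$; and $\binom{ap}{bp}^{\mathfrak a}=\dfrac{c^{\mathfrak a}_a\cdots c^{\mathfrak a}_{a-b+1}}{c^{\mathfrak a}_b\cdots c^{\mathfrak a}_1}$. *)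

theory Defs
  imports Main "HOL-Library.Poly_Mapping" "HOL-Computational_Algebra.Formal_Power_Series"
begin

text \<open>The free polynomial algebra M1 = Q[zeta_a(3), zeta_a(5), ...] is modelled by letting
  the variable with index k (k odd, k >= 3) stand for zeta_a(k); other variables are unused.\<close>

type_synonym mpol = "(nat \<Rightarrow>\<^sub>0 nat) \<Rightarrow>\<^sub>0 rat"

definition mconst :: "rat \<Rightarrow> mpol" where
  "mconst c = Poly_Mapping.single 0 c"

definition mvar :: "nat \<Rightarrow> mpol" where
  "mvar k = Poly_Mapping.single (Poly_Mapping.single k 1) 1"

definition zeta_a :: "nat \<Rightarrow> mpol" where
  "zeta_a n = (if odd n \<and> 3 \<le> n then mvar n else 0)"

definition mpartial :: "nat \<Rightarrow> mpol \<Rightarrow> mpol" where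
  "mpartial v p = (\<Sum>m\<in>Poly_Mapping.keys p.
      Poly_Mapping.single (m - Poly_Mapping.single v (1::nat))
        (rat_of_nat (Poly_Mapping.lookup m v) * Poly_Mapping.lookup p m))"

text \<open>delta_k: the continuous Q((T))-linear derivation d/d zeta_a(k), acting coefficientwise.
  All series occurring here are power series in T.\<close>
definition delta :: "nat \<Rightarrow> mpol fps \<Rightarrow> mpol fps" where
  "delta k f = Abs_fps (\<lambda>j. mpartial k (fps_nth f j))"

definition Ha :: "nat \<Rightarrow> mpol fps" where
  "Ha n = Abs_fps (\<lambda>j. if j = 0 then 0
      else (-1) ^ n * of_nat ((n + j - 1) choose (n - 1)) * zeta_a (n + j))"

function Ha1 :: "nat \<Rightarrow> mpol fps" where
  "Ha1 n = (if n = 0 then 1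
     else fps_const (mconst (1 / of_nat n)) *
       (\<Sum>i\<in>{1..n}. (-1) ^ (i - 1) * Ha i * Ha1 (n - i)))"
  by auto
termination
  by (relation "measure id") auto

declare Ha1.simps [simp del]

text \<open>c_n = n sum_{j>=0} (n-1)^j T^j H_a(1^j); coefficient of T^m.\<close>
definition ca :: "nat \<Rightarrow> mpol fps" where
  "ca n = Abs_fps (\<lambda>m. of_nat n * (\<Sum>j\<le>m. of_nat ((n - 1) ^ j) * (fps_nth (Ha1 j) (m - j))))"

text \<open>binom(ap, bp)_a = (c_a ... c_{a-b+1}) / (c_b ... c_1).  The denominator has
  invertible constant term b!, so the quotient is the product with its power series inverse.\<close>
definition binom_a :: "nat \<Rightarrow> nat \<Rightarrow> mpol fps" where
  "binom_a a b = (let D = (\<Prod>i\<in>{1..b}. ca i) in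
     (\<Prod>i\<in>{a - b + 1..a}. ca i) * fps_right_inverse D (mconst (1 / of_nat (fact b))))"

end

theory Submission
  imports Defs
begin

text \<open>Since \<open>\<delta>\<^sub>k\<close> is a derivation, it suffices to show that each \<open>c\<^sub>n\<close> is an eigenvector:
  \<open>\<delta>\<^sub>k c\<^sub>n = -(T\<^sup>k/k)(n\<^sup>k - 1 - (n-1)\<^sup>k) c\<^sub>n\<close>; the eigenvalues then add up along the products
  in \<open>binom(ap,bp)\<close> and telescope.  Newton's identity defining \<open>H(1\<^sup>j)\<close> turns \<open>\<delta>\<^sub>k H(1\<^sup>j)\<close>
  into the convolution \<open>\<Sum>\<^sub>l d\<^sub>l H(1\<^sup>j\<^sup>-\<^sup>l)\<close> with \<open>d\<^sub>l = -(k-1 choose l-1)/l \<cdot> T\<^sup>k\<^sup>-\<^sup>l\<close>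
  (\<open>l < k\<close>), because \<open>H(l)\<close> contains \<open>\<zeta>(k)\<close> only in its coefficient of \<open>T\<^sup>k\<^sup>-\<^sup>l\<close>.  Hence
  \<open>\<delta>\<^sub>k c\<^sub>n = (\<Sum>\<^sub>l d\<^sub>l (n-1)\<^sup>l T\<^sup>l) c\<^sub>n\<close>, and the binomial theorem evaluates the bracket.\<close>

section \<open>Partial derivatives of polynomials\<close>

lemma poly_mapping_sum_single:
  "(p :: 'a \<Rightarrow>\<^sub>0 'b::comm_monoid_add) =
     (\<Sum>m\<in>Poly_Mapping.keys p. Poly_Mapping.single m (Poly_Mapping.lookup p m))"
proof (rule poly_mapping_eqI)
  fix k
  have "Poly_Mapping.lookup (\<Sum>m\<in>Poly_Mapping.keys p. Poly_Mapping.single m (Poly_Mapping.lookup p m)) k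
      = (\<Sum>m\<in>Poly_Mapping.keys p. (Poly_Mapping.lookup p m when m = k))"
    by (simp add: lookup_sum lookup_single when_def eq_commute)
  also have "\<dots> = Poly_Mapping.lookup p k"
    by (cases "k \<in> Poly_Mapping.keys p") (auto simp: when_def in_keys_iff)
  finally show "Poly_Mapping.lookup p k =
      Poly_Mapping.lookup (\<Sum>m\<in>Poly_Mapping.keys p. Poly_Mapping.single m (Poly_Mapping.lookup p m)) k"
    by simp
qed

lemma mpartial_single:
  "mpartial v (Poly_Mapping.single m c) =
     Poly_Mapping.single (m - Poly_Mapping.single v 1) (rat_of_nat (Poly_Mapping.lookup m v) * c)"
  by (cases "c = 0") (simp_all add: mpartial_def)

lemma mpartial_add: "mpartial v (p + q) = mpartial v p + mpartial v q"
  unfolding mpartial_def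
  by (rule setsum_keys_plus_distrib) (simp_all add: single_add distrib_left)

lemma mpartial_zero [simp]: "mpartial v 0 = 0"
  by (simp add: mpartial_def)

lemma mpartial_sum: "mpartial v (\<Sum>i\<in>I. f i) = (\<Sum>i\<in>I. mpartial v (f i))"
  by (induction I rule: infinite_finite_induct) (simp_all add: mpartial_add)

lemma minus_single_add_commute:
  fixes m n :: "'a \<Rightarrow>\<^sub>0 nat"
  assumes "0 < Poly_Mapping.lookup m v"
  shows "m - Poly_Mapping.single v 1 + n = m + n - Poly_Mapping.single v 1"
  by (rule poly_mapping_eqI)
    (use assms in \<open>auto simp: lookup_add lookup_minus lookup_single when_def\<close>)

lemma mpartial_single_mult:
  "mpartial v (Poly_Mapping.single m a * Poly_Mapping.single n b) =
     mpartial v (Poly_Mapping.single m a) * Poly_Mapping.single n b +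
     Poly_Mapping.single m a * mpartial v (Poly_Mapping.single n b)"
proof -
  let ?e = "Poly_Mapping.single v (1::nat)"
  have m_shift: "Poly_Mapping.single (m - ?e + n) (rat_of_nat (Poly_Mapping.lookup m v) * a * b) =
      Poly_Mapping.single (m + n - ?e) (rat_of_nat (Poly_Mapping.lookup m v) * a * b)"
    by (cases "Poly_Mapping.lookup m v = 0") (use minus_single_add_commute[of m v n] in simp_all)
  have n_shift: "Poly_Mapping.single (m + (n - ?e)) (a * (rat_of_nat (Poly_Mapping.lookup n v) * b)) =
      Poly_Mapping.single (m + n - ?e) (a * (rat_of_nat (Poly_Mapping.lookup n v) * b))"
    by (cases "Poly_Mapping.lookup n v = 0")
      (use minus_single_add_commute[of n v m] in \<open>simp_all add: add.commute[of m]\<close>)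
  have "mpartial v (Poly_Mapping.single m a * Poly_Mapping.single n b) =
      Poly_Mapping.single (m + n - ?e) (rat_of_nat (Poly_Mapping.lookup m v) * a * b) +
      Poly_Mapping.single (m + n - ?e) (a * (rat_of_nat (Poly_Mapping.lookup n v) * b))"
    by (simp only: mult_single mpartial_single lookup_add of_nat_add single_add[symmetric])
      (simp add: algebra_simps)
  then show ?thesis
    by (simp only: mult_single mpartial_single m_shift n_shift)
qed

lemma mpartial_mult: "mpartial v (p * q) = mpartial v p * q + p * mpartial v q"
proof -
  let ?P = "\<lambda>m. Poly_Mapping.single m (Poly_Mapping.lookup p m)"
  let ?Q = "\<lambda>n. Poly_Mapping.single n (Poly_Mapping.lookup q n)"
  have "mpartial v (p * q) = mpartial v ((\<Sum>m\<in>Poly_Mapping.keys p. ?P m) * (\<Sum>n\<in>Poly_Mapping.keys q. ?Q n))"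
    by (simp flip: poly_mapping_sum_single)
  also have "\<dots> = (\<Sum>m\<in>Poly_Mapping.keys p. \<Sum>n\<in>Poly_Mapping.keys q.
      mpartial v (?P m) * ?Q n + ?P m * mpartial v (?Q n))"
    by (simp add: sum_product mpartial_sum mpartial_single_mult)
  also have "\<dots> = mpartial v (\<Sum>m\<in>Poly_Mapping.keys p. ?P m) * (\<Sum>n\<in>Poly_Mapping.keys q. ?Q n)
      + (\<Sum>m\<in>Poly_Mapping.keys p. ?P m) * mpartial v (\<Sum>n\<in>Poly_Mapping.keys q. ?Q n)"
    by (simp add: mpartial_sum sum.distrib sum_product)
  finally show ?thesis
    by (simp flip: poly_mapping_sum_single)
qed

lemma mconst_add: "mconst (a + b) = mconst a + mconst b"
  by (simp add: mconst_def single_add)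

lemma mconst_mult: "mconst (a * b) = mconst a * mconst b"
  by (simp add: mconst_def mult_single)

lemma mconst_uminus: "mconst (- a) = - mconst a"
  by (simp add: mconst_def single_uminus)

lemma mconst_diff: "mconst (a - b) = mconst a - mconst b"
  using mconst_add[of a "- b"] by (simp add: mconst_uminus)

lemma mconst_of_nat: "of_nat n = mconst (of_nat n)"
  by (simp add: mconst_def)

lemma mconst_0 [simp]: "mconst 0 = 0"
  by (simp add: mconst_def)

lemma mconst_1 [simp]: "mconst 1 = 1"
  by (simp add: mconst_def)

lemma mconst_power: "mconst (a ^ n) = mconst a ^ n"
  by (induction n) (simp_all add: mconst_mult)

lemma mconst_prod: "mconst (\<Prod>i\<in>I. f i) = (\<Prod>i\<in>I. mconst (f i))"
  by (induction I rule: infinite_finite_induct) (simp_all add: mconst_mult)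

lemma mconst_sum: "mconst (\<Sum>i\<in>I. f i) = (\<Sum>i\<in>I. mconst (f i))"
  by (induction I rule: infinite_finite_induct) (simp_all add: mconst_add)

lemma fps_const_mconst_of_nat: "(of_nat n :: mpol fps) = fps_const (mconst (of_nat n))"
  by (simp add: mconst_of_nat flip: fps_of_nat)

lemma mpartial_mconst [simp]: "mpartial v (mconst c) = 0"
  by (simp add: mconst_def mpartial_single)

lemma mpartial_mconst_mult: "mpartial v (mconst c * p) = mconst c * mpartial v p"
  by (simp add: mpartial_mult)

lemma mpartial_zeta_a:
  assumes "odd k" "3 \<le> k"
  shows "mpartial k (zeta_a n) = (if n = k then 1 else 0)"
  using assms by (auto simp: zeta_a_def mvar_def mpartial_single lookup_single)

section \<open>The derivation \<open>\<delta>\<^sub>k\<close> on power series\<close>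

lemma delta_nth [simp]: "fps_nth (delta k f) j = mpartial k (fps_nth f j)"
  by (simp add: delta_def)

lemma delta_sum: "delta k (\<Sum>i\<in>I. f i) = (\<Sum>i\<in>I. delta k (f i))"
  by (rule fps_ext) (simp add: fps_sum_nth mpartial_sum)

lemma delta_mult: "delta k (f * g) = delta k f * g + f * delta k g"
  by (rule fps_ext) (simp add: fps_mult_nth mpartial_sum mpartial_mult sum.distrib)

lemma delta_const_mult: "delta k (fps_const (mconst c) * f) = fps_const (mconst c) * delta k f"
  by (rule fps_ext) (simp add: mpartial_mconst_mult)

lemma delta_fps_const_mconst [simp]: "delta k (fps_const (mconst c)) = 0"
  by (rule fps_ext) simp

lemma delta_one [simp]: "delta k 1 = 0"
  using delta_fps_const_mconst[of k 1] by simp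

lemma delta_of_nat [simp]: "delta k (of_nat n) = 0"
  by (simp add: fps_const_mconst_of_nat)

lemma delta_neg_one_power [simp]: "delta k ((-1) ^ n) = 0"
  using delta_fps_const_mconst[of k "(-1) ^ n"]
  by (simp add: mconst_power mconst_uminus flip: fps_const_power fps_const_neg)

lemma delta_prod_eigen:
  assumes "finite A" "\<And>i. i \<in> A \<Longrightarrow> delta k (f i) = fps_const (mconst (g i)) * fps_X ^ k * f i"
  shows "delta k (\<Prod>i\<in>A. f i) = fps_const (mconst (\<Sum>i\<in>A. g i)) * fps_X ^ k * (\<Prod>i\<in>A. f i)"
  using assms
  by (induction A rule: finite_induct)
    (simp_all add: delta_mult mconst_add algebra_simps flip: fps_const_add)

lemma delta_right_inverse_eigen:
  assumes "D * R = 1" and "delta k D = G * D"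
  shows "delta k R = - (G * R)"
proof -
  have DdR: "D * delta k R = - (G * D * R)"
    using arg_cong[OF assms(1), of "delta k"] by (simp add: delta_mult assms(2) add_eq_0_iff)
  have "delta k R = R * (D * delta k R)"
    by (simp add: assms(1) flip: mult.assoc[of R] mult.commute[of D])
  also have "\<dots> = - (G * R) * (D * R)"
    by (simp add: DdR mult_ac)
  finally show ?thesis
    by (simp add: assms(1))
qed

section \<open>The series \<open>H(l)\<close> and \<open>H(1\<^sup>j)\<close>\<close>

lemma delta_Ha:
  assumes "odd k" "3 \<le> k" "1 \<le> l"
  shows "delta k (Ha l) = (if l < k then
      fps_const (mconst ((-1) ^ l * of_nat ((k - 1) choose (l - 1)))) * fps_X ^ (k - l) else 0)"
proof (rule fps_ext)
  fix j
  have "(-1) ^ l * of_nat c = mconst ((-1) ^ l * of_nat c)" for c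
    by (simp add: mconst_mult mconst_power mconst_uminus flip: mconst_of_nat)
  then have "fps_nth (delta k (Ha l)) j = (if j = 0 then 0 else
      mconst ((-1) ^ l * of_nat ((l + j - 1) choose (l - 1))) * (if l + j = k then 1 else 0))"
    by (simp add: Ha_def mpartial_zeta_a assms mpartial_mconst_mult)
  then show "fps_nth (delta k (Ha l)) j = fps_nth (if l < k then
      fps_const (mconst ((-1) ^ l * of_nat ((k - 1) choose (l - 1)))) * fps_X ^ (k - l) else 0) j"
    using assms by auto
qed

definition delta_Ha1_coeff :: "nat \<Rightarrow> nat \<Rightarrow> mpol fps" where
  "delta_Ha1_coeff k l = (if l < k then
      fps_const (mconst (- of_nat ((k - 1) choose (l - 1)) / of_nat l)) * fps_X ^ (k - l) else 0)"

lemma delta_Ha_eq_delta_Ha1_coeff: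
  assumes "odd k" "3 \<le> k" "1 \<le> l"
  shows "(-1) ^ (l - 1) * delta k (Ha l) = of_nat l * delta_Ha1_coeff k l"
proof -
  have "(-1 :: mpol fps) ^ (l - 1) = fps_const (mconst ((-1) ^ (l - 1)))"
    by (simp add: mconst_power mconst_uminus flip: fps_const_power fps_const_neg)
  moreover have "(-1) ^ (l - 1) * ((-1) ^ l * of_nat ((k - 1) choose (l - 1))) =
      (of_nat l * (- of_nat ((k - 1) choose (l - 1)) / of_nat l) :: rat)"
    using assms(3) by (cases l) simp_all
  ultimately show ?thesis
    by (simp add: delta_Ha[OF assms] delta_Ha1_coeff_def fps_const_mconst_of_nat mult.assoc
        fps_const_mult flip: mconst_mult)
qed

lemma Ha1_0 [simp]: "Ha1 0 = 1"
  by (simp add: Ha1.simps)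

lemma Ha1_recurrence:
  "(\<Sum>i\<in>{1..n}. (-1) ^ (i - 1) * Ha i * Ha1 (n - i)) = of_nat n * Ha1 n"
proof (cases "n = 0")
  case False
  then have "of_nat n * Ha1 n = fps_const (mconst (of_nat n * (1 / of_nat n))) *
      (\<Sum>i\<in>{1..n}. (-1) ^ (i - 1) * Ha i * Ha1 (n - i))"
    by (subst Ha1.simps) (simp add: fps_const_mconst_of_nat mult.assoc flip: mconst_mult)
  then show ?thesis
    using False by simp
qed simp

lemma sum_Ha_convolution_Ha1:
  "(\<Sum>i\<in>{1..j}. (-1) ^ (i - 1) * Ha i * (\<Sum>l\<in>{1..j - i}. d l * Ha1 (j - i - l))) =
     (\<Sum>l\<in>{1..j}. of_nat (j - l) * d l * Ha1 (j - l))"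
proof -
  have "(\<Sum>i\<in>{1..j}. (-1) ^ (i - 1) * Ha i * (\<Sum>l\<in>{1..j - i}. d l * Ha1 (j - i - l))) =
      (\<Sum>i\<in>{1..j}. \<Sum>l\<in>{l\<in>{1..j}. i + l \<le> j}. (-1) ^ (i - 1) * Ha i * (d l * Ha1 (j - i - l)))"
  proof (rule sum.cong [OF refl])
    fix i assume "i \<in> {1..j}"
    then have "{l\<in>{1..j}. i + l \<le> j} = {1..j - i}" by auto
    then show "(-1) ^ (i - 1) * Ha i * (\<Sum>l\<in>{1..j - i}. d l * Ha1 (j - i - l)) =
        (\<Sum>l\<in>{l\<in>{1..j}. i + l \<le> j}. (-1) ^ (i - 1) * Ha i * (d l * Ha1 (j - i - l)))"
      by (simp add: sum_distrib_left)
  qed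
  also have "\<dots> = (\<Sum>l\<in>{1..j}. \<Sum>i\<in>{i\<in>{1..j}. i + l \<le> j}.
      (-1) ^ (i - 1) * Ha i * (d l * Ha1 (j - i - l)))"
    by (rule sum.swap_restrict) simp_all
  also have "\<dots> = (\<Sum>l\<in>{1..j}. d l * (\<Sum>i\<in>{1..j - l}. (-1) ^ (i - 1) * Ha i * Ha1 (j - l - i)))"
  proof (rule sum.cong [OF refl])
    fix l assume "l \<in> {1..j}"
    then have "{i\<in>{1..j}. i + l \<le> j} = {1..j - l}" by auto
    then show "(\<Sum>i\<in>{i\<in>{1..j}. i + l \<le> j}. (-1) ^ (i - 1) * Ha i * (d l * Ha1 (j - i - l))) =
        d l * (\<Sum>i\<in>{1..j - l}. (-1) ^ (i - 1) * Ha i * Ha1 (j - l - i))"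
      by (simp add: sum_distrib_left algebra_simps diff_commute)
  qed
  finally show ?thesis
    by (simp only: Ha1_recurrence) (simp add: mult_ac)
qed

lemma delta_Ha1:
  assumes "odd k" "3 \<le> k"
  shows "delta k (Ha1 j) = (\<Sum>l\<in>{1..j}. delta_Ha1_coeff k l * Ha1 (j - l))"
proof (induction j rule: less_induct)
  case (less j)
  let ?d = "delta_Ha1_coeff k"
  have "of_nat j * delta k (Ha1 j) = delta k (of_nat j * Ha1 j)"
    by (simp add: delta_mult)
  also have "\<dots> = (\<Sum>i\<in>{1..j}. (-1) ^ (i - 1) * delta k (Ha i) * Ha1 (j - i)) +
      (\<Sum>i\<in>{1..j}. (-1) ^ (i - 1) * Ha i * delta k (Ha1 (j - i)))"
    unfolding Ha1_recurrence [symmetric]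
    by (simp add: delta_sum delta_mult sum.distrib algebra_simps)
  also have "\<dots> = (\<Sum>l\<in>{1..j}. of_nat l * ?d l * Ha1 (j - l)) +
      (\<Sum>i\<in>{1..j}. (-1) ^ (i - 1) * Ha i * (\<Sum>l\<in>{1..j - i}. ?d l * Ha1 (j - i - l)))"
    using delta_Ha_eq_delta_Ha1_coeff[OF assms] less.IH
    by (intro arg_cong2[where f = "(+)"] sum.cong refl) auto
  also have "\<dots> = (\<Sum>l\<in>{1..j}. of_nat l * ?d l * Ha1 (j - l)) +
      (\<Sum>l\<in>{1..j}. of_nat (j - l) * ?d l * Ha1 (j - l))"
    by (simp only: sum_Ha_convolution_Ha1)
  also have "\<dots> = of_nat j * (\<Sum>l\<in>{1..j}. ?d l * Ha1 (j - l))"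
    by (simp add: sum_distrib_left flip: sum.distrib)
      (intro sum.cong refl, simp add: algebra_simps flip: distrib_right of_nat_add)
  finally have "fps_const (mconst (1 / of_nat j)) * of_nat j * delta k (Ha1 j) =
      fps_const (mconst (1 / of_nat j)) * of_nat j * (\<Sum>l\<in>{1..j}. ?d l * Ha1 (j - l))"
    by (simp only: mult.assoc)
  then show ?case
    by (cases "j = 0") (simp_all add: fps_const_mconst_of_nat fps_const_mult flip: mconst_mult)
qed

section \<open>The series \<open>c\<^sub>n\<close>\<close>

definition fps_wsum :: "'a::comm_ring_1 \<Rightarrow> (nat \<Rightarrow> 'a fps) \<Rightarrow> 'a fps" where
  "fps_wsum u F = Abs_fps (\<lambda>m. \<Sum>j\<le>m. u ^ j * fps_nth (F j) (m - j))"

lemma fps_wsum_nth: "fps_nth (fps_wsum u F) m = (\<Sum>j\<le>m. u ^ j * fps_nth (F j) (m - j))"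
  by (simp add: fps_wsum_def)

lemma fps_wsum_sum: "fps_wsum u (\<lambda>j. \<Sum>l\<in>L. F l j) = (\<Sum>l\<in>L. fps_wsum u (F l))"
  by (rule fps_ext) (simp add: fps_wsum_nth fps_sum_nth sum_distrib_left sum.swap[of _ L])

lemma fps_wsum_mult_left: "fps_wsum u (\<lambda>j. D * F j) = D * fps_wsum u F"
proof (rule fps_ext)
  fix m
  have "fps_nth (fps_wsum u (\<lambda>j. D * F j)) m =
      (\<Sum>j\<in>{..m}. \<Sum>i\<in>{i\<in>{..m}. j + i \<le> m}. u ^ j * (fps_nth D i * fps_nth (F j) (m - j - i)))"
    unfolding fps_wsum_nth fps_mult_nth sum_distrib_left by (intro sum.cong refl) auto
  also have "\<dots> = (\<Sum>i\<in>{..m}. \<Sum>j\<in>{j\<in>{..m}. j + i \<le> m}.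
      u ^ j * (fps_nth D i * fps_nth (F j) (m - j - i)))"
    by (rule sum.swap_restrict) simp_all
  also have "\<dots> = (\<Sum>i\<in>{0..m}. fps_nth D i * (\<Sum>j\<le>m - i. u ^ j * fps_nth (F j) (m - i - j)))"
    unfolding atLeast0AtMost
  proof (rule sum.cong [OF refl])
    fix i assume "i \<in> {..m}"
    then have "{j\<in>{..m}. j + i \<le> m} = {..m - i}" by auto
    then show "(\<Sum>j\<in>{j\<in>{..m}. j + i \<le> m}. u ^ j * (fps_nth D i * fps_nth (F j) (m - j - i))) =
        fps_nth D i * (\<Sum>j\<le>m - i. u ^ j * fps_nth (F j) (m - i - j))"
      by (simp add: sum_distrib_left algebra_simps diff_commute)
  qed
  finally show "fps_nth (fps_wsum u (\<lambda>j. D * F j)) m = fps_nth (D * fps_wsum u F) m"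
    by (simp only: fps_wsum_nth fps_mult_nth)
qed

lemma fps_wsum_shift:
  "fps_wsum u (\<lambda>j. if l \<le> j then F (j - l) else 0) = fps_const (u ^ l) * fps_X ^ l * fps_wsum u F"
proof (rule fps_ext)
  fix m
  show "fps_nth (fps_wsum u (\<lambda>j. if l \<le> j then F (j - l) else 0)) m =
      fps_nth (fps_const (u ^ l) * fps_X ^ l * fps_wsum u F) m"
  proof (cases "m < l")
    case True
    then show ?thesis by (simp add: fps_wsum_nth mult.assoc fps_X_power_mult_nth)
  next
    case False
    have "fps_nth (fps_wsum u (\<lambda>j. if l \<le> j then F (j - l) else 0)) m =
        (\<Sum>j\<in>{0 + l..(m - l) + l}. u ^ j * fps_nth (F (j - l)) (m - j))"
      unfolding fps_wsum_nth using False by (intro sum.mono_neutral_cong_right) auto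
    also have "\<dots> = (\<Sum>j\<in>{0..m - l}. u ^ (j + l) * fps_nth (F j) (m - l - j))"
      by (subst sum.shift_bounds_cl_nat_ivl) (rule sum.cong; simp add: add.commute)
    finally show ?thesis
      using False
      by (simp add: mult.assoc fps_X_power_mult_nth fps_wsum_nth sum_distrib_left power_add
          atLeast0AtMost algebra_simps)
  qed
qed

lemma ca_eq_fps_wsum: "ca n = fps_const (of_nat n) * fps_wsum (of_nat (n - 1)) Ha1"
  by (rule fps_ext) (simp add: ca_def fps_wsum_nth)

lemma delta_fps_wsum: "delta k (fps_wsum (mconst c) F) = fps_wsum (mconst c) (\<lambda>j. delta k (F j))"
  by (rule fps_ext)
    (simp add: fps_wsum_nth mpartial_sum mpartial_mconst_mult flip: mconst_power)

lemma sum_choose_div_power: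
  assumes "1 \<le> k"
  shows "(\<Sum>l\<in>{1..<k}. of_nat ((k - 1) choose (l - 1)) / of_nat l * (x :: 'a::field_char_0) ^ l)
       = ((x + 1) ^ k - 1 - x ^ k) / of_nat k"
proof -
  have "of_nat ((k - 1) choose (l - 1)) / of_nat l = (of_nat (k choose l) / of_nat k :: 'a)"
    if "l \<in> {1..<k}" for l
  proof -
    have "of_nat (k * ((k - 1) choose (l - 1))) = (of_nat ((k choose l) * l) :: 'a)"
      using that assms Suc_times_binomial_eq[of "k - 1" "l - 1"] by simp
    then show ?thesis
      using that by (simp add: field_simps)
  qed
  then have "(\<Sum>l\<in>{1..<k}. of_nat ((k - 1) choose (l - 1)) / of_nat l * x ^ l) =
      (\<Sum>l\<in>{1..<k}. of_nat (k choose l) * x ^ l) / of_nat k"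
    by (simp add: sum_divide_distrib)
  also have "(\<Sum>l\<in>{1..<k}. of_nat (k choose l) * x ^ l) = (x + 1) ^ k - 1 - x ^ k"
  proof -
    have "{..k} = insert 0 (insert k {1..<k})"
      using assms by auto
    then show ?thesis
      using assms by (simp add: binomial_ring)
  qed
  finally show ?thesis .
qed

lemma fps_const_sum: "fps_const (\<Sum>i\<in>I. f i) = (\<Sum>i\<in>I. fps_const (f i))"
  by (induction I rule: infinite_finite_induct) (simp_all flip: fps_const_add)

lemma sum_delta_Ha1_coeff:
  assumes "1 \<le> k"
  shows "(\<Sum>l\<in>{1..<k}. delta_Ha1_coeff k l * (fps_const (mconst x ^ l) * fps_X ^ l))
     = fps_const (mconst (- ((x + 1) ^ k - 1 - x ^ k) / of_nat k)) * fps_X ^ k"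
proof -
  let ?c = "\<lambda>l. - (of_nat ((k - 1) choose (l - 1)) / of_nat l * x ^ l)"
  have "delta_Ha1_coeff k l * (fps_const (mconst x ^ l) * fps_X ^ l) =
      fps_const (mconst (?c l)) * fps_X ^ k" if "l \<in> {1..<k}" for l
  proof -
    have "delta_Ha1_coeff k l * (fps_const (mconst x ^ l) * fps_X ^ l) =
        fps_const (mconst (- of_nat ((k - 1) choose (l - 1)) / of_nat l) * mconst x ^ l) *
          (fps_X ^ (k - l) * fps_X ^ l)"
      using that by (simp add: delta_Ha1_coeff_def mult_ac)
    also have "fps_X ^ (k - l) * fps_X ^ l = (fps_X ^ k :: mpol fps)"
      using that by (simp flip: power_add)
    finally show ?thesis
      by (simp flip: mconst_mult mconst_power)
  qed
  then have "(\<Sum>l\<in>{1..<k}. delta_Ha1_coeff k l * (fps_const (mconst x ^ l) * fps_X ^ l)) =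
      fps_const (mconst (\<Sum>l\<in>{1..<k}. ?c l)) * fps_X ^ k"
    by (simp add: mconst_sum fps_const_sum sum_distrib_right)
  also have "(\<Sum>l\<in>{1..<k}. ?c l) = - ((x + 1) ^ k - 1 - x ^ k) / of_nat k"
    by (simp only: sum_negf sum_choose_div_power[OF assms] minus_divide_left)
  finally show ?thesis .
qed

definition ca_weight :: "nat \<Rightarrow> nat \<Rightarrow> rat" where
  "ca_weight k n = of_nat n ^ k - 1 - of_nat (n - 1) ^ k"

lemma delta_ca:
  assumes "odd k" "3 \<le> k" "1 \<le> n"
  shows "delta k (ca n) = fps_const (mconst (- ca_weight k n / of_nat k)) * fps_X ^ k * ca n"
proof -
  define u where "u = (of_nat (n - 1) :: rat)"
  have u: "(of_nat (n - 1) :: mpol) = mconst u"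
    by (simp add: u_def mconst_of_nat)
  let ?d = "delta_Ha1_coeff k"
  have "delta k (fps_wsum (mconst u) Ha1) =
      fps_wsum (mconst u) (\<lambda>j. \<Sum>l\<in>{1..<k}. ?d l * (if l \<le> j then Ha1 (j - l) else 0))"
  proof -
    have "(\<Sum>l\<in>{1..j}. ?d l * Ha1 (j - l)) =
        (\<Sum>l\<in>{1..<k}. ?d l * (if l \<le> j then Ha1 (j - l) else 0))" for j
      by (intro sum.mono_neutral_cong) (auto simp: delta_Ha1_coeff_def)
    then show ?thesis
      by (simp add: delta_fps_wsum delta_Ha1[OF assms(1,2)])
  qed
  also have "\<dots> = (\<Sum>l\<in>{1..<k}. ?d l * (fps_const (mconst u ^ l) * fps_X ^ l)) *
      fps_wsum (mconst u) Ha1"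
    by (simp add: fps_wsum_sum fps_wsum_mult_left fps_wsum_shift sum_distrib_right mult.assoc)
  also have "(\<Sum>l\<in>{1..<k}. ?d l * (fps_const (mconst u ^ l) * fps_X ^ l)) =
      fps_const (mconst (- ca_weight k n / of_nat k)) * fps_X ^ k"
    using assms sum_delta_Ha1_coeff[of k u] by (simp add: ca_weight_def u_def of_nat_diff)
  finally show ?thesis
    unfolding ca_eq_fps_wsum u by (simp add: mconst_of_nat[of n] delta_const_mult mult_ac)
qed

lemma sum_ca_weight:
  "(\<Sum>i\<in>{Suc m..m + c}. ca_weight k i) = of_nat (m + c) ^ k - of_nat m ^ k - of_nat c"
  by (induction c) (simp_all add: ca_weight_def atLeastAtMostSuc_conv)

lemma delta_prod_ca:
  assumes "odd k" "3 \<le> k"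
  shows "delta k (\<Prod>i\<in>{Suc m..m + c}. ca i) =
    fps_const (mconst (- (of_nat (m + c) ^ k - of_nat m ^ k - of_nat c) / of_nat k)) *
      fps_X ^ k * (\<Prod>i\<in>{Suc m..m + c}. ca i)"
proof -
  have "(\<Sum>i\<in>{Suc m..m + c}. - ca_weight k i / of_nat k) =
      - (\<Sum>i\<in>{Suc m..m + c}. ca_weight k i) / of_nat k"
    by (simp add: sum_negf sum_divide_distrib)
  also have "\<dots> = - (of_nat (m + c) ^ k - of_nat m ^ k - of_nat c) / of_nat k"
    by (simp only: sum_ca_weight)
  finally have "(\<Sum>i\<in>{Suc m..m + c}. - ca_weight k i / of_nat k) =
      - (of_nat (m + c) ^ k - of_nat m ^ k - of_nat c) / of_nat k" .
  with delta_prod_eigen[of "{Suc m..m + c}" k ca "\<lambda>i. - ca_weight k i / of_nat k"]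
  show ?thesis
    using assms by (simp add: delta_ca)
qed

lemma fps_prod_nth_0: "fps_nth (\<Prod>i\<in>A. f i) 0 = (\<Prod>i\<in>A. fps_nth (f i) 0)"
  by (induction A rule: infinite_finite_induct) simp_all

theorem mainTheorem10:
  fixes a b k :: nat
  assumes "1 \<le> b" and "b \<le> a" and "odd k" and "3 \<le> k"
  shows "delta k (binom_a a b) =
    fps_const (mconst (- (of_int (int a ^ k - int b ^ k - int (a - b) ^ k)) / of_nat k))
      * fps_X ^ k * binom_a a b"
proof -
  let ?w = "\<lambda>m c. - (of_nat (m + c) ^ k - of_nat m ^ k - of_nat c) / of_nat k :: rat"
  define N where "N = (\<Prod>i\<in>{Suc (a - b)..(a - b) + b}. ca i)"
  define D where "D = (\<Prod>i\<in>{Suc 0..0 + b}. ca i)"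
  define R where "R = fps_right_inverse D (mconst (1 / of_nat (fact b)))"
  have binom: "binom_a a b = N * R"
    using assms by (simp add: binom_a_def N_def D_def R_def)
  have "fps_nth D 0 = mconst (of_nat (fact b))"
    by (simp add: D_def fps_prod_nth_0 ca_def fact_prod mconst_of_nat mconst_prod)
  then have "D * R = 1"
    unfolding R_def by (intro fps_right_inverse) (simp flip: mconst_mult)
  then have dR: "delta k R = - (fps_const (mconst (?w 0 b)) * fps_X ^ k * R)"
    using delta_prod_ca[OF assms(3,4), of 0 b] assms(4)
    by (intro delta_right_inverse_eigen) (simp_all add: D_def power_0_left)
  have dN: "delta k N = fps_const (mconst (?w (a - b) b)) * fps_X ^ k * N"
    unfolding N_def by (rule delta_prod_ca) (use assms in auto)
  have "delta k (binom_a a b) = fps_const (mconst (?w (a - b) b - ?w 0 b)) * fps_X ^ k * binom_a a b"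
    unfolding binom delta_mult dN dR mconst_diff
    by (simp add: algebra_simps del: fps_const_sub flip: fps_const_sub)
  also have "?w (a - b) b - ?w 0 b = - (of_int (int a ^ k - int b ^ k - int (a - b) ^ k)) / of_nat k"
    using assms by (simp add: field_simps)
  finally show ?thesis .
qed

end
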